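(* Let $K\subseteq\mathbb{R}^{n}$ be compact and let $T\subseteq\mathbb{R}^{n}$ be compact with non-empty interior. Then the set $\mathcal{C}$ of measures $\mu\in\mathcal{B}_{+}^{n}$ satisfying $\mu*\mathbbm{1}_{T}\ge\mathbbm{1}_{K}$ and $\int_{\mathbb{R}^{n}}d\mu=N^{*}(K,T)$ is non-empty and convex.
   Context: $\mathcal{B}_{+}^{n}$ is the set of non-negative regular Borel measures on $\mathbb{R}^n$; $(\mu*\mathbbm{1}_T)(x)=\int\mathbbm{1}_T(x-y)\,d\mu(y)$ with $\mathbbm{1}_T$ the indicator of $T$. $N^{*}(K,T)=\inf\{\mu(\mathbb{R}^n):\mu\in\mathcal{B}_+^n,\ \mu*\mathbbm{1}_T\ge\mathbbm{1}_K\}$. *)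

theory Defs
  imports "HOL-Analysis.Analysis"
begin

definition regular_borel_measure :: "'a::euclidean_space measure \<Rightarrow> bool" where
  "regular_borel_measure M \<longleftrightarrow> sets M = sets borel \<and>
     (\<forall>B \<in> sets borel.
        emeasure M B = (INF U \<in> {U. B \<subseteq> U \<and> open U}. emeasure M U) \<and>
        emeasure M B = (SUP C \<in> {C. C \<subseteq> B \<and> compact C}. emeasure M C))"

definition conv_ind :: "'a::euclidean_space measure \<Rightarrow> 'a set \<Rightarrow> 'a \<Rightarrow> ennreal" where
  "conv_ind \<mu> T x = (\<integral>\<^sup>+ y. indicator T (x - y) \<partial>\<mu>)"

definition covers :: "'a::euclidean_space measure \<Rightarrow> 'a set \<Rightarrow> 'a set \<Rightarrow> bool" where
  "covers \<mu> K T \<longleftrightarrow> (\<forall>x. conv_ind \<mu> T x \<ge> indicator K x)"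

definition N_star :: "'a::euclidean_space set \<Rightarrow> 'a set \<Rightarrow> ennreal" where
  "N_star K T = (INF \<mu> \<in> {\<mu>. regular_borel_measure \<mu> \<and> covers \<mu> K T}. emeasure \<mu> (space \<mu>))"

definition optimal_measures :: "'a::euclidean_space set \<Rightarrow> 'a set \<Rightarrow> 'a measure set" where
  "optimal_measures K T = {\<mu>. regular_borel_measure \<mu> \<and> covers \<mu> K T \<and>
      emeasure \<mu> (space \<mu>) = N_star K T}"

definition convex_comb_measure :: "real \<Rightarrow> 'a::euclidean_space measure \<Rightarrow> 'a measure \<Rightarrow> 'a measure" where
  "convex_comb_measure t \<mu> \<nu> = measure_of UNIV (sets borel)
      (\<lambda>A. ennreal t * emeasure \<mu> A + ennreal (1 - t) * emeasure \<nu> A)"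

end

theory Submission
  imports Defs "HOL-Probability.Probability"
begin

text \<open>Near-optimal covering measures, restricted to the compact set \<open>K - T\<close> and normalised,
  are probability measures on a common compact set. Helly's selection theorem, transported from
  the real line to \<open>\<real>\<^sup>n\<close> by a Borel injection of a cube into \<open>[0, 1]\<close> that interleaves the
  binary digits of the coordinates and has a uniformly continuous inverse, gives a subsequence
  whose limit dominates the limit superior of the masses of closed sets. Each covering condition
  \<open>\<mu> {y. x - y \<in> T} \<ge> 1\<close> concerns a closed set, so it survives the limit, and scaling the limit
  by \<open>N\<^sup>*(K, T)\<close> gives an optimal measure. Convexity holds because both the covering condition
  and the total mass are affine in \<open>\<mu>\<close>.\<close>

definition binary_digit :: "nat \<Rightarrow> real \<Rightarrow> real" where
  "binary_digit m t = of_int \<lfloor>2 ^ Suc m * t\<rfloor> - 2 * of_int \<lfloor>2 ^ m * t\<rfloor>"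

lemma binary_digit_01: "binary_digit m t \<in> {0, 1}"
proof -
  define u where "u = 2 ^ m * t"
  have "2 * \<lfloor>u\<rfloor> \<le> \<lfloor>2 * u\<rfloor>" "\<lfloor>2 * u\<rfloor> < 2 * \<lfloor>u\<rfloor> + 2"
    by (simp_all add: le_floor_iff floor_less_iff) linarith+
  then have "\<lfloor>2 * u\<rfloor> - 2 * \<lfloor>u\<rfloor> \<in> {0, 1}" by auto
  moreover have "binary_digit m t = of_int (\<lfloor>2 * u\<rfloor> - 2 * \<lfloor>u\<rfloor>)"
    by (simp add: binary_digit_def u_def mult.assoc)
  ultimately show ?thesis by auto
qed

lemma floor_pow2_eq_if_binary_digits_eq:
  assumes "\<lfloor>t\<rfloor> = \<lfloor>t'\<rfloor>" and "\<And>m. m < M \<Longrightarrow> binary_digit m t = binary_digit m t'"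
  shows "\<lfloor>2 ^ M * t\<rfloor> = \<lfloor>2 ^ M * t'\<rfloor>"
  using assms(2)
proof (induction M)
  case 0
  then show ?case using assms(1) by simp
next
  case (Suc M)
  then have "\<lfloor>2 ^ M * t\<rfloor> = \<lfloor>2 ^ M * t'\<rfloor>" "binary_digit M t = binary_digit M t'"
    by simp_all
  then show ?case unfolding binary_digit_def by linarith
qed

lemma abs_diff_lt_if_binary_digits_eq:
  assumes "\<lfloor>t\<rfloor> = \<lfloor>t'\<rfloor>" and "\<And>m. m < M \<Longrightarrow> binary_digit m t = binary_digit m t'"
  shows "\<bar>t - t'\<bar> < 1 / 2 ^ M"
proof -
  have "\<bar>2 ^ M * t - 2 ^ M * t'\<bar> < 1"
    using floor_pow2_eq_if_binary_digits_eq[of t t' M, OF assms] by linarith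
  then have "2 ^ M * \<bar>t - t'\<bar> < 1" by (simp add: abs_mult flip: right_diff_distrib)
  then show ?thesis by (simp add: field_simps)
qed

definition cantor_sum :: "(nat \<Rightarrow> real) \<Rightarrow> real" where
  "cantor_sum a = (\<Sum>j. 2 * a j / 3 ^ Suc j)"

lemma sums_two_over_pow3: "(\<lambda>n. 2 / 3 ^ Suc (n + k) :: real) sums (1 / 3 ^ k)"
proof -
  have "(\<lambda>n. (2 / 3) * (1 / 3 :: real) ^ n) sums ((2 / 3) * (1 / (1 - 1 / 3)))"
    by (intro sums_mult geometric_sums) simp
  then have "(\<lambda>n. 1 / 3 ^ k * (2 / 3 * (1 / 3 :: real) ^ n)) sums (1 / 3 ^ k * 1)"
    by (intro sums_mult) simp
  then show ?thesis by (simp add: power_add power_one_over mult_ac)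
qed

lemma summable_cantor_sum:
  assumes "\<And>j. a j \<in> {0, 1}"
  shows "summable (\<lambda>j. 2 * a j / 3 ^ Suc j :: real)"
proof (rule summable_comparison_test')
  show "summable (\<lambda>j. 2 / 3 ^ Suc j :: real)"
    using sums_two_over_pow3[of 0] by (simp add: sums_iff)
  show "norm (2 * a j / 3 ^ Suc j) \<le> 2 / 3 ^ Suc j" for j
    using assms[of j] by auto
qed

lemma cantor_sum_bounds:
  assumes "\<And>j. a j \<in> {0, 1}"
  shows "0 \<le> cantor_sum a" and "cantor_sum a \<le> 1"
proof -
  have a01: "0 \<le> a j" "a j \<le> 1" for j
    using assms[of j] by auto
  show "0 \<le> cantor_sum a"
    unfolding cantor_sum_def using a01 by (intro suminf_nonneg summable_cantor_sum assms) simp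
  have "cantor_sum a \<le> (\<Sum>j. 2 / 3 ^ Suc j)"
    unfolding cantor_sum_def using a01 sums_two_over_pow3[of 0]
    by (intro suminf_le summable_cantor_sum assms) (auto simp: sums_iff divide_right_mono)
  then show "cantor_sum a \<le> 1"
    using sums_two_over_pow3[of 0] by (simp add: sums_iff)
qed

lemma cantor_sum_diff_ge:
  assumes a: "\<And>j. a j \<in> {0, 1}" and b: "\<And>j. b j \<in> {0, 1}"
    and eq: "\<And>j. j < J \<Longrightarrow> a j = b j" and ne: "a J \<noteq> b J"
  shows "1 / 3 ^ Suc J \<le> \<bar>cantor_sum a - cantor_sum b\<bar>"
proof -
  define f where "f j = 2 * (a j - b j) / 3 ^ Suc j" for j
  have f_eq: "f = (\<lambda>j. 2 * a j / 3 ^ Suc j - 2 * b j / 3 ^ Suc j)"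
    by (simp add: fun_eq_iff f_def diff_divide_distrib right_diff_distrib)
  have "cantor_sum a - cantor_sum b = suminf f" and f: "summable f"
    using suminf_diff[OF summable_cantor_sum[of a, OF a] summable_cantor_sum[of b, OF b]]
      summable_diff[OF summable_cantor_sum[of a, OF a] summable_cantor_sum[of b, OF b]]
    by (simp_all add: cantor_sum_def f_eq)
  moreover have "suminf f = (\<Sum>n. f (n + Suc J)) + f J"
    using suminf_split_initial_segment[OF f, of "Suc J"] by (simp add: f_def eq)
  moreover have "\<bar>f J\<bar> = 2 / 3 ^ Suc J"
    using a[of J] b[of J] ne by (auto simp: f_def)
  moreover have "\<bar>\<Sum>n. f (n + Suc J)\<bar> \<le> 1 / 3 ^ Suc J"
  proof -
    have tail: "(\<lambda>n. 2 / 3 ^ Suc (n + Suc J)) sums (1 / 3 ^ Suc J :: real)"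
      by (rule sums_two_over_pow3)
    have "norm (\<Sum>n. f (n + Suc J)) \<le> (\<Sum>n. 2 / 3 ^ Suc (n + Suc J))"
    proof (rule norm_suminf_le)
      show "norm (f (n + Suc J)) \<le> 2 / 3 ^ Suc (n + Suc J)" for n
        using a[of "n + Suc J"] b[of "n + Suc J"] by (auto simp: f_def)
    qed (use tail in \<open>simp add: sums_iff\<close>)
    then show ?thesis using tail by (simp add: sums_iff)
  qed
  ultimately show ?thesis by linarith
qed

lemma eq_if_cantor_sum_close:
  assumes a: "\<And>j. a j \<in> {0, 1}" and b: "\<And>j. b j \<in> {0, 1}"
    and close: "\<bar>cantor_sum a - cantor_sum b\<bar> < 1 / 3 ^ Suc J" and "j \<le> J"
  shows "a j = b j"
proof (rule ccontr)
  assume "a j \<noteq> b j"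
  define J0 where "J0 = (LEAST i. a i \<noteq> b i)"
  have "a J0 \<noteq> b J0" "J0 \<le> j"
    unfolding J0_def using \<open>a j \<noteq> b j\<close> by (fact LeastI, fact Least_le)
  moreover have "\<And>i. i < J0 \<Longrightarrow> a i = b i"
    unfolding J0_def using not_less_Least by blast
  ultimately have "1 / 3 ^ Suc J0 \<le> \<bar>cantor_sum a - cantor_sum b\<bar>"
    using cantor_sum_diff_ge[of a b J0, OF a b] by blast
  moreover have "1 / 3 ^ Suc J \<le> (1 / 3 ^ Suc J0 :: real)"
    using \<open>J0 \<le> j\<close> \<open>j \<le> J\<close> by (intro divide_left_mono power_increasing) auto
  ultimately show False using close by linarith
qed

definition cube_coord :: "'a::euclidean_space \<Rightarrow> 'a \<Rightarrow> 'a \<Rightarrow> real" where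
  "cube_coord a b y = (y \<bullet> b + a \<bullet> b) / (2 * (a \<bullet> b))"

text \<open>The \<open>j\<close>-th ternary digit of the code is the \<open>(j div d)\<close>-th binary digit of the
  \<open>(j mod d)\<close>-th rescaled coordinate: the binary expansions of the coordinates are interleaved.\<close>
definition cube_code :: "'a::euclidean_space list \<Rightarrow> 'a \<Rightarrow> 'a \<Rightarrow> real" where
  "cube_code bs a y =
     cantor_sum (\<lambda>j. binary_digit (j div length bs) (cube_coord a (bs ! (j mod length bs)) y))"

lemma cube_code_bounds: "0 \<le> cube_code bs a y" "cube_code bs a y \<le> 1"
  unfolding cube_code_def by (rule cantor_sum_bounds, rule binary_digit_01)+

lemma cube_code_measurable: "cube_code bs a \<in> borel_measurable borel"
  unfolding cube_code_def cantor_sum_def binary_digit_def cube_coord_def by measurable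

lemma cube_coord_in_unit_interval:
  assumes "y \<in> box (-a) a" and "b \<in> Basis"
  shows "0 < cube_coord a b y" and "cube_coord a b y < 1"
  using assms by (auto simp: cube_coord_def mem_box field_simps)

lemma norm_diff_lt_if_cube_code_close:
  fixes y y' :: "'a::euclidean_space"
  assumes bs: "distinct bs" "set bs = Basis" and y: "y \<in> box (-a) a" and y': "y' \<in> box (-a) a"
    and close: "\<bar>cube_code bs a y - cube_code bs a y'\<bar> < 1 / 3 ^ Suc (length bs * M)"
  shows "norm (y - y') < (\<Sum>b\<in>Basis. 2 * (a \<bullet> b)) / 2 ^ M"
proof -
  define d where "d = length bs"
  have "d > 0"
    using bs distinct_card[of bs] unfolding d_def by (metis card_gt_0_iff finite_Basis nonempty_Basis)
  have coord: "\<bar>(y - y') \<bullet> b\<bar> < 2 * (a \<bullet> b) / 2 ^ M" if b: "b \<in> Basis" for b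
  proof -
    obtain i where i: "i < d" "b = bs ! i"
      using b bs(2) unfolding d_def by (metis in_set_conv_nth)
    have "binary_digit m (cube_coord a b y) = binary_digit m (cube_coord a b y')" if "m < M" for m
    proof -
      have "m * d + i < Suc m * d"
        using \<open>i < d\<close> by simp
      also have "\<dots> \<le> M * d"
        using \<open>m < M\<close> by (intro mult_le_mono1) simp
      finally have "m * d + i \<le> d * M"
        by (simp add: mult.commute)
      then show ?thesis
        using eq_if_cantor_sum_close[OF binary_digit_01 binary_digit_01 close[unfolded cube_code_def]]
          \<open>i < d\<close> \<open>d > 0\<close> unfolding d_def i(2) by fastforce
    qed
    moreover have "\<lfloor>cube_coord a b y\<rfloor> = 0" "\<lfloor>cube_coord a b y'\<rfloor> = 0"
      using cube_coord_in_unit_interval[OF y b] cube_coord_in_unit_interval[OF y' b]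
      by (simp_all add: floor_eq_iff)
    ultimately have "\<bar>cube_coord a b y - cube_coord a b y'\<bar> < 1 / 2 ^ M"
      by (intro abs_diff_lt_if_binary_digits_eq) auto
    moreover have "a \<bullet> b > 0"
      using y b by (auto simp: mem_box)
    then have "cube_coord a b y - cube_coord a b y' = ((y - y') \<bullet> b) / (2 * (a \<bullet> b))"
      by (simp add: cube_coord_def inner_diff_left field_simps)
    ultimately show ?thesis
      using \<open>a \<bullet> b > 0\<close> by (simp add: abs_divide field_simps)
  qed
  have "norm (y - y') \<le> (\<Sum>b\<in>Basis. \<bar>(y - y') \<bullet> b\<bar>)"
    by (rule norm_le_l1)
  also have "\<dots> < (\<Sum>b\<in>Basis. 2 * (a \<bullet> b) / 2 ^ M)"
    by (rule sum_strict_mono) (auto intro: coord)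
  finally show ?thesis
    by (simp add: sum_divide_distrib)
qed

lemma cube_code_inverse_uniform:
  fixes bs :: "'a::euclidean_space list"
  assumes bs: "distinct bs" "set bs = Basis" and "e > 0"
  obtains \<delta> where "\<delta> > 0"
    "\<And>y y'. y \<in> box (-a) a \<Longrightarrow> y' \<in> box (-a) a \<Longrightarrow>
       \<bar>cube_code bs a y - cube_code bs a y'\<bar> < \<delta> \<Longrightarrow> norm (y - y') < e"
proof -
  define S where "S = (\<Sum>b\<in>Basis. 2 * (a \<bullet> b))"
  obtain M where "S / e < 2 ^ M"
    using real_arch_pow[of 2 "S / e"] by auto
  then have "S / 2 ^ M < e"
    using \<open>e > 0\<close> by (simp add: field_simps)
  then show ?thesis
    using that[of "1 / 3 ^ Suc (length bs * M)"] norm_diff_lt_if_cube_code_close[OF bs]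
    unfolding S_def by fastforce
qed

lemma inj_on_cube_code:
  fixes bs :: "'a::euclidean_space list"
  assumes "distinct bs" "set bs = Basis"
  shows "inj_on (cube_code bs a) (box (-a) a)"
proof (rule inj_onI, rule ccontr)
  fix y y' assume y: "y \<in> box (-a) a" "y' \<in> box (-a) a"
    and eq: "cube_code bs a y = cube_code bs a y'" and "y \<noteq> y'"
  then have "norm (y - y') > 0" by simp
  then obtain \<delta> where "\<delta> > 0" and \<delta>:
    "\<And>u v. u \<in> box (-a) a \<Longrightarrow> v \<in> box (-a) a \<Longrightarrow>
       \<bar>cube_code bs a u - cube_code bs a v\<bar> < \<delta> \<Longrightarrow> norm (u - v) < norm (y - y')"
    using cube_code_inverse_uniform[OF assms] by metis
  show False using \<delta>[OF y] eq \<open>\<delta> > 0\<close> by simp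
qed

lemma uniformly_continuous_on_inv_cube_code:
  fixes bs :: "'a::euclidean_space list"
  assumes bs: "distinct bs" "set bs = Basis" and A: "A \<subseteq> box (-a) a"
  shows "uniformly_continuous_on (cube_code bs a ` A) (inv_into A (cube_code bs a))"
  unfolding uniformly_continuous_on_def
proof (intro allI impI)
  fix e :: real assume "e > 0"
  then obtain \<delta> where "\<delta> > 0" and \<delta>:
    "\<And>y y'. y \<in> box (-a) a \<Longrightarrow> y' \<in> box (-a) a \<Longrightarrow>
       \<bar>cube_code bs a y - cube_code bs a y'\<bar> < \<delta> \<Longrightarrow> norm (y - y') < e"
    using cube_code_inverse_uniform[OF bs] by metis
  have inj: "inj_on (cube_code bs a) A"
    using inj_on_subset[OF inj_on_cube_code[OF bs] A] .
  show "\<exists>\<delta>>0. \<forall>z\<in>cube_code bs a ` A. \<forall>z'\<in>cube_code bs a ` A. dist z' z < \<delta> \<longrightarrow>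
          dist (inv_into A (cube_code bs a) z') (inv_into A (cube_code bs a) z) < e"
    using \<open>\<delta> > 0\<close> \<delta> A inj by (force simp: dist_norm)
qed

lemma tendsto_indicator_closed:
  fixes F :: "'a::metric_space set"
  assumes "closed F" "F \<noteq> {}"
  shows "(\<lambda>j. max 0 (1 - real j * infdist z F)) \<longlonglongrightarrow> indicator F z"
proof (cases "z \<in> F")
  case False
  then have "infdist z F > 0"
    using infdist_pos_not_in_closed[OF assms] by blast
  then obtain N :: nat where "1 / infdist z F < N"
    using reals_Archimedean2 by blast
  have "max 0 (1 - real j * infdist z F) = 0" if "N \<le> j" for j
  proof -
    have "1 < real N * infdist z F"
      using \<open>1 / infdist z F < N\<close> \<open>infdist z F > 0\<close> by (simp add: field_simps)
    also have "\<dots> \<le> real j * infdist z F"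
      using \<open>N \<le> j\<close> \<open>infdist z F > 0\<close> by (intro mult_right_mono) auto
    finally show ?thesis by simp
  qed
  then show ?thesis
    using False by (intro tendsto_eventually eventually_sequentiallyI) auto
qed simp

lemma weak_conv_limit_le_measure_closed:
  fixes P :: "nat \<Rightarrow> real measure"
  assumes P: "\<And>k. real_distribution (P k)" and \<rho>: "real_distribution \<rho>"
    and conv: "weak_conv_m P \<rho>" and F: "closed F"
    and c: "c \<longlonglongrightarrow> c0" and le: "\<And>k. c k \<le> measure (P k) F"
  shows "c0 \<le> measure \<rho> F"
proof (cases "F = {}")
  case True
  then show ?thesis
    using le by (intro LIMSEQ_le_const2[OF c]) auto
next
  case False
  interpret \<rho>: real_distribution \<rho> by fact
  define f where "f j z = max 0 (1 - real j * infdist z F)" for j z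
  have f_cont: "isCont (f j) z" for j z
    unfolding f_def by (intro continuous_intros)
  have f_bound: "norm (f j z) \<le> 1" for j z
    unfolding f_def using infdist_nonneg[of z F] by auto
  have [measurable]: "f j \<in> borel_measurable borel" for j
    by (intro borel_measurable_continuous_onI continuous_at_imp_continuous_on) (simp add: f_cont)
  have indicator_le: "indicator F z \<le> f j z" for j z
    by (simp add: f_def indicator_def)
  have [measurable]: "F \<in> sets borel"
    using F by (rule borel_closed)
  have f_lim: "(\<lambda>j. f j z) \<longlonglongrightarrow> indicator F z" for z
    unfolding f_def by (rule tendsto_indicator_closed[OF F False])
  have "c0 \<le> (\<integral>z. f j z \<partial>\<rho>)" for j
  proof (rule LIMSEQ_le[OF c])
    show "(\<lambda>k. \<integral>z. f j z \<partial>P k) \<longlonglongrightarrow> (\<integral>z. f j z \<partial>\<rho>)"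
      by (rule weak_conv_imp_integral_bdd_continuous_conv[OF P \<rho> conv f_cont f_bound])
    have "c k \<le> (\<integral>z. f j z \<partial>P k)" for k
    proof -
      interpret Pk: real_distribution "P k" by (rule P)
      have "measure (P k) F = (\<integral>z. indicator F z \<partial>P k)"
        by simp
      also have "\<dots> \<le> (\<integral>z. f j z \<partial>P k)"
        using f_bound indicator_le by (intro integral_mono Pk.integrable_const_bound[where B=1]) auto
      finally show ?thesis using le[of k] by linarith
    qed
    then show "\<exists>N. \<forall>k\<ge>N. c k \<le> (\<integral>z. f j z \<partial>P k)" by blast
  qed
  moreover have "(\<lambda>j. \<integral>z. f j z \<partial>\<rho>) \<longlonglongrightarrow> (\<integral>z. indicator F z \<partial>\<rho>)"
    using f_bound f_lim by (intro integral_dominated_convergence[where w="\<lambda>_. 1"]) auto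
  ultimately have "c0 \<le> (\<integral>z. indicator F z \<partial>\<rho>)"
    by (intro LIMSEQ_le_const) auto
  then show ?thesis by simp
qed

lemma prob_measures_on_compact_convergent_subseq:
  fixes P :: "nat \<Rightarrow> 'a::euclidean_space measure"
  assumes L: "compact L" and P: "\<And>k. prob_space (P k)" "\<And>k. sets (P k) = sets borel"
    and concentrated: "\<And>k. AE y in P k. y \<in> L"
  obtains sub \<rho> where "strict_mono sub" "prob_space \<rho>" "sets \<rho> = sets borel"
    "\<And>F c c0. closed F \<Longrightarrow> c \<longlonglongrightarrow> c0 \<Longrightarrow> (\<And>k. c k \<le> measure (P (sub k)) F) \<Longrightarrow>
       c0 \<le> measure \<rho> F"
proof -
  obtain a where L_box: "L \<subseteq> box (-a) a"
    using bounded_subset_box_symmetric[OF compact_imp_bounded[OF L]] by blast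
  obtain bs :: "'a list" where bs: "distinct bs" "set bs = Basis"
    using finite_distinct_list[OF finite_Basis] by metis
  define c where "c = cube_code bs a"
  have c_meas[measurable]: "c \<in> borel_measurable borel"
    unfolding c_def by (rule cube_code_measurable)
  have c_meas_P: "c \<in> borel_measurable (P k)" for k
    unfolding measurable_cong_sets[OF P(2)[of k] refl] by (rule c_meas)
  define Q where "Q k = distr (P k) borel c" for k
  have Q: "real_distribution (Q k)" for k
    unfolding Q_def using P(1) c_meas_P by (rule prob_space.real_distribution_distr)
  have "tight Q"
    unfolding tight_def
  proof (intro conjI allI impI Q)
    fix \<epsilon> :: real assume "\<epsilon> > 0"
    have "c y \<in> {-1<..2}" for y
      using cube_code_bounds[of bs a y] by (simp add: c_def)
    then have "c -` {-1<..2} = UNIV"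
      by blast
    then have "measure (Q k) {-1<..2} = 1" for k
      using prob_space.prob_space[OF P(1)] sets_eq_imp_space_eq[OF P(2)]
      by (simp add: Q_def measure_distr[OF c_meas_P])
    then show "\<exists>l u. l < u \<and> (\<forall>k. 1 - \<epsilon> < measure (Q k) {l<..u})"
      using \<open>\<epsilon> > 0\<close> by (intro exI[of _ "-1"] exI[of _ 2]) auto
  qed
  then obtain sub \<rho>' where sub: "strict_mono sub" and \<rho>': "real_distribution \<rho>'"
    and conv: "weak_conv_m (Q \<circ> id \<circ> sub) \<rho>'"
    using tight_imp_convergent_subsubsequence[OF _ strict_mono_id] by blast
  interpret \<rho>': real_distribution \<rho>' by fact
  define S where "S = c ` L"
  obtain g0 where g0_uc: "uniformly_continuous_on (closure S) g0"
    and g0_inv: "\<And>z. z \<in> S \<Longrightarrow> inv_into L c z = g0 z"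
    using uniformly_continuous_on_extension_on_closure[OF
        uniformly_continuous_on_inv_cube_code[OF bs L_box]] unfolding S_def c_def by metis
  have g0_cont: "continuous_on (closure S) g0"
    using g0_uc by (rule uniformly_continuous_imp_continuous)
  have g0_c: "g0 (c y) = y" if "y \<in> L" for y
    using g0_inv[of "c y"] that inj_on_subset[OF inj_on_cube_code[OF bs] L_box]
    by (auto simp: S_def c_def)
  text \<open>Outside \<open>closure S\<close> the decoding map is irrelevant; \<open>0\<close> just makes it Borel.\<close>
  define g where "g z = (if z \<in> closure S then g0 z else 0)" for z
  have g_meas[measurable]: "g \<in> borel_measurable borel"
    unfolding g_def by (intro borel_measurable_continuous_on_if g0_cont) auto
  define \<rho> where "\<rho> = distr \<rho>' borel g"
  show thesis
  proof (rule that[OF sub _ _])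
    show "prob_space \<rho>"
      unfolding \<rho>_def by (rule \<rho>'.prob_space_distr) simp
    show "sets \<rho> = sets borel"
      by (simp add: \<rho>_def)
    fix F and x :: "nat \<Rightarrow> real" and x0
    assume F: "closed F" and x: "x \<longlonglongrightarrow> x0" and le: "\<And>k. x k \<le> measure (P (sub k)) F"
    define F' where "F' = closure (c ` (F \<inter> L))"
    have "F' \<subseteq> closure S"
      unfolding F'_def S_def by (intro closure_mono) auto
    have "g ` F' \<subseteq> F \<inter> L"
    proof -
      have "g0 ` F' \<subseteq> F \<inter> L"
        unfolding F'_def using g0_c
        by (intro image_closure_subset continuous_on_subset[OF g0_cont] closure_mono
              closed_Int F compact_imp_closed[OF L]) (auto simp: S_def)
      then show ?thesis
        using \<open>F' \<subseteq> closure S\<close> by (auto simp: g_def)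
    qed
    have [measurable]: "F \<in> sets borel" "L \<in> sets borel" "F' \<in> sets borel"
      using F L by (auto simp: F'_def intro: borel_closed compact_imp_closed)
    have "c -` F' \<in> sets borel"
      using measurable_sets[OF c_meas \<open>F' \<in> sets borel\<close>] by simp
    have "F \<inter> L \<subseteq> c -` F'"
      using closure_subset[of "c ` (F \<inter> L)"] by (auto simp: F'_def)
    have le': "x k \<le> measure ((Q \<circ> id \<circ> sub) k) F'" for k
    proof -
      interpret Pk: prob_space "P (sub k)" by (rule P)
      have "measure (P (sub k)) F = measure (P (sub k)) (F \<inter> L)"
        using concentrated[of "sub k"] P(2) by (intro measure_eq_AE) (auto elim: AE_mp)
      also have "\<dots> \<le> measure (P (sub k)) (c -` F')"
        using P(2) \<open>F \<inter> L \<subseteq> c -` F'\<close> \<open>c -` F' \<in> sets borel\<close>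
        by (intro Pk.finite_measure_mono) auto
      also have "\<dots> = measure ((Q \<circ> id \<circ> sub) k) F'"
        using sets_eq_imp_space_eq[OF P(2)] by (simp add: Q_def measure_distr[OF c_meas_P])
      finally show ?thesis using le[of k] by linarith
    qed
    have "x0 \<le> measure \<rho>' F'"
      using Q by (intro weak_conv_limit_le_measure_closed[OF _ \<rho>' conv _ x le']) (simp_all add: F'_def)
    also have "\<dots> \<le> measure \<rho>' (g -` F)"
      using \<open>g ` F' \<subseteq> F \<inter> L\<close> measurable_sets[OF g_meas \<open>F \<in> sets borel\<close>]
      by (intro \<rho>'.finite_measure_mono) auto
    also have "\<dots> = measure \<rho> F"
      by (simp add: \<rho>_def measure_distr)
    finally show "x0 \<le> measure \<rho> F" .
  qed
qed

lemma regular_borel_measureI: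
  fixes M :: "'a::euclidean_space measure"
  assumes "sets M = sets borel" "emeasure M (space M) \<noteq> \<infinity>"
  shows "regular_borel_measure M"
  unfolding regular_borel_measure_def
  using assms inner_regular[OF assms] outer_regular[OF assms] by auto

lemma conv_ind_eq_emeasure:
  assumes "sets \<mu> = sets borel" and [measurable]: "T \<in> sets borel"
  shows "conv_ind \<mu> T x = emeasure \<mu> {y. x - y \<in> T}"
proof -
  have "{y. x - y \<in> T} \<in> sets \<mu>"
    unfolding assms(1) by measurable
  then show ?thesis
    unfolding conv_ind_def by (simp flip: nn_integral_indicator add: indicator_def)
qed

lemma covers_iff_emeasure:
  assumes "sets \<mu> = sets borel" and "T \<in> sets borel"
  shows "covers \<mu> K T \<longleftrightarrow> (\<forall>x\<in>K. 1 \<le> emeasure \<mu> {y. x - y \<in> T})"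
proof -
  have "indicator K x \<le> emeasure \<mu> {y. x - y \<in> T} \<longleftrightarrow> (x \<in> K \<longrightarrow> 1 \<le> emeasure \<mu> {y. x - y \<in> T})" for x
    by (simp add: indicator_def)
  then show ?thesis
    unfolding covers_def conv_ind_eq_emeasure[OF assms] by blast
qed

lemma N_star_le_emeasure_space:
  "regular_borel_measure \<mu> \<Longrightarrow> covers \<mu> K T \<Longrightarrow> N_star K T \<le> emeasure \<mu> (space \<mu>)"
  unfolding N_star_def by (rule INF_lower) auto

lemma one_le_N_star:
  assumes "K \<noteq> {}"
  shows "1 \<le> N_star K T"
  unfolding N_star_def
proof (rule INF_greatest)
  fix \<mu> assume "\<mu> \<in> {\<mu>. regular_borel_measure \<mu> \<and> covers \<mu> K T}"
  then have "covers \<mu> K T" by simp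
  obtain x where "x \<in> K" using assms by auto
  then have "1 \<le> conv_ind \<mu> T x"
    using \<open>covers \<mu> K T\<close> unfolding covers_def by (metis indicator_simps(1))
  also have "\<dots> \<le> (\<integral>\<^sup>+ y. 1 \<partial>\<mu>)"
    unfolding conv_ind_def by (intro nn_integral_mono) (simp add: indicator_def)
  finally show "1 \<le> emeasure \<mu> (space \<mu>)" by simp
qed

text \<open>Finitely many translates of a ball inside \<open>T\<close> cover \<open>K\<close>.\<close>
lemma N_star_finite:
  fixes K T :: "'a::euclidean_space set"
  assumes K: "compact K" and "interior T \<noteq> {}" and T: "T \<in> sets borel"
  shows "N_star K T < \<infinity>"
proof -
  obtain t0 r where "r > 0" "ball t0 r \<subseteq> T"
  proof -
    obtain t0 where "t0 \<in> interior T"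
      using assms(2) by blast
    then show ?thesis
      using that unfolding mem_interior by blast
  qed
  obtain C where "C \<subseteq> K" "finite C" and C: "K \<subseteq> (\<Union>c\<in>C. ball c r)"
    using compactE_image[OF K, of K "\<lambda>c. ball c r"] \<open>r > 0\<close> by force
  define P where "P = (\<lambda>c. c - t0) ` C"
  have "finite P" using \<open>finite C\<close> by (simp add: P_def)
  define \<mu> where "\<mu> = distr (count_space P) borel (\<lambda>y. y)"
  have sets: "sets \<mu> = sets borel" and space: "space \<mu> = UNIV"
    by (simp_all add: \<mu>_def)
  have emeasure: "emeasure \<mu> A = of_nat (card (A \<inter> P))" if "A \<in> sets borel" for A
    using that \<open>finite P\<close> by (simp add: \<mu>_def emeasure_distr Int_commute)
  have "covers \<mu> K T"
    unfolding covers_iff_emeasure[OF sets T]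
  proof
    fix x assume "x \<in> K"
    then obtain c where "c \<in> C" "dist c x < r" using C by auto
    then have "x - (c - t0) \<in> T"
      using \<open>ball t0 r \<subseteq> T\<close> by (auto simp: dist_norm algebra_simps)
    then have "{y. x - y \<in> T} \<inter> P \<noteq> {}"
      using \<open>c \<in> C\<close> by (auto simp: P_def)
    then have "1 \<le> card ({y. x - y \<in> T} \<inter> P)"
      using \<open>finite P\<close> by (simp add: Suc_le_eq card_gt_0_iff)
    moreover have "{y. x - y \<in> T} \<in> sets borel"
      using T by measurable
    ultimately show "1 \<le> emeasure \<mu> {y. x - y \<in> T}"
      by (simp add: emeasure)
  qed
  moreover have "emeasure \<mu> (space \<mu>) = of_nat (card P)"
    by (simp add: space emeasure)
  ultimately have "N_star K T \<le> of_nat (card P)"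
    using N_star_le_emeasure_space regular_borel_measureI[OF sets] by fastforce
  then show ?thesis
    using of_nat_less_top[of "card P"] unfolding infinity_ennreal_def by (rule le_less_trans)
qed

lemma sets_convex_comb_measure [simp]:
  "sets (convex_comb_measure t \<mu> \<nu>) = sets (borel :: 'a::euclidean_space measure)"
  unfolding convex_comb_measure_def
  by (metis sets.sigma_sets_eq sets_measure_of sets.space_closed space_borel)

lemma space_convex_comb_measure [simp]:
  "space (convex_comb_measure t \<mu> \<nu>) = (UNIV :: 'a::euclidean_space set)"
  using sets_eq_imp_space_eq[OF sets_convex_comb_measure] by simp

lemma emeasure_convex_comb_measure:
  fixes \<mu> \<nu> :: "'a::euclidean_space measure"
  assumes sets: "sets \<mu> = sets borel" "sets \<nu> = sets borel" and A: "A \<in> sets borel"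
  shows "emeasure (convex_comb_measure t \<mu> \<nu>) A =
    ennreal t * emeasure \<mu> A + ennreal (1 - t) * emeasure \<nu> A"
  unfolding convex_comb_measure_def
proof (rule emeasure_measure_of_sigma[OF _ _ _ A])
  show "sigma_algebra UNIV (sets borel)"
    by (metis sets.sigma_algebra_axioms space_borel)
  show "positive (sets borel) (\<lambda>A. ennreal t * emeasure \<mu> A + ennreal (1 - t) * emeasure \<nu> A)"
    by (simp add: positive_def)
  show "countably_additive (sets borel)
      (\<lambda>A. ennreal t * emeasure \<mu> A + ennreal (1 - t) * emeasure \<nu> A)"
  proof (rule countably_additiveI)
    fix A :: "nat \<Rightarrow> 'a set" assume "range A \<subseteq> sets borel" "disjoint_family A"
    then have "(\<Sum>i. emeasure \<mu> (A i)) = emeasure \<mu> (\<Union>i. A i)"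
      "(\<Sum>i. emeasure \<nu> (A i)) = emeasure \<nu> (\<Union>i. A i)"
      using sets by (auto intro!: suminf_emeasure)
    then show "(\<Sum>i. ennreal t * emeasure \<mu> (A i) + ennreal (1 - t) * emeasure \<nu> (A i)) =
        ennreal t * emeasure \<mu> (\<Union>i. A i) + ennreal (1 - t) * emeasure \<nu> (\<Union>i. A i)"
      by (simp add: suminf_add[symmetric] summableI ennreal_suminf_cmult)
  qed
qed

lemma ennreal_convex_comb_self:
  assumes "0 \<le> t" "t \<le> 1"
  shows "ennreal t * a + ennreal (1 - t) * a = a"
proof -
  have "ennreal t + ennreal (1 - t) = 1"
    using assms by (simp flip: ennreal_plus)
  then show ?thesis
    by (metis distrib_right mult_1)
qed

lemma convex_comb_measure_optimal:
  fixes K T :: "'a::euclidean_space set"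
  assumes fin: "N_star K T < \<infinity>" and T: "T \<in> sets borel"
    and \<mu>: "\<mu> \<in> optimal_measures K T" and \<nu>: "\<nu> \<in> optimal_measures K T" and t: "0 \<le> t" "t \<le> 1"
  shows "convex_comb_measure t \<mu> \<nu> \<in> optimal_measures K T"
proof -
  define M where "M = convex_comb_measure t \<mu> \<nu>"
  have sets: "sets \<mu> = sets borel" "sets \<nu> = sets borel"
    using \<mu> \<nu> by (auto simp: optimal_measures_def regular_borel_measure_def)
  have emeasure_M: "emeasure M A = ennreal t * emeasure \<mu> A + ennreal (1 - t) * emeasure \<nu> A"
    if "A \<in> sets borel" for A
    unfolding M_def using sets that by (rule emeasure_convex_comb_measure)
  have "emeasure \<mu> UNIV = N_star K T" "emeasure \<nu> UNIV = N_star K T"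
    using \<mu> \<nu> sets_eq_imp_space_eq[OF sets(1)] sets_eq_imp_space_eq[OF sets(2)]
    by (auto simp: optimal_measures_def)
  then have mass: "emeasure M (space M) = N_star K T"
    using emeasure_M[of UNIV] by (simp add: M_def ennreal_convex_comb_self t)
  have sets_M: "sets M = sets borel"
    by (simp add: M_def)
  have "covers M K T"
    unfolding covers_iff_emeasure[OF sets_M T]
  proof
    fix x assume "x \<in> K"
    moreover have "{y. x - y \<in> T} \<in> sets borel"
      using T by measurable
    ultimately have "1 \<le> emeasure \<mu> {y. x - y \<in> T}" "1 \<le> emeasure \<nu> {y. x - y \<in> T}"
      and M_eq: "emeasure M {y. x - y \<in> T} =
        ennreal t * emeasure \<mu> {y. x - y \<in> T} + ennreal (1 - t) * emeasure \<nu> {y. x - y \<in> T}"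
      using \<mu> \<nu> sets T emeasure_M by (auto simp: optimal_measures_def covers_iff_emeasure)
    have "(1::ennreal) = ennreal t * 1 + ennreal (1 - t) * 1"
      by (simp only: ennreal_convex_comb_self t)
    also have "\<dots> \<le> emeasure M {y. x - y \<in> T}"
      unfolding M_eq using \<open>1 \<le> emeasure \<mu> _\<close> \<open>1 \<le> emeasure \<nu> _\<close>
      by (intro add_mono mult_left_mono) auto
    finally show "1 \<le> emeasure M {y. x - y \<in> T}" .
  qed
  moreover have "regular_borel_measure M"
    using mass fin by (intro regular_borel_measureI[OF sets_M]) auto
  ultimately show ?thesis
    using mass by (simp add: optimal_measures_def M_def)
qed

lemma normalised_near_optimal_covers:
  fixes K T :: "'a::euclidean_space set"
  assumes K: "compact K" "K \<noteq> {}" and T: "compact T" and N: "N_star K T = ennreal n"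
  obtains P where "\<And>k. prob_space (P k)" "\<And>k. sets (P k) = sets borel"
    "\<And>k. AE y in P k. y \<in> {x - t | x t. x \<in> K \<and> t \<in> T}"
    "\<And>k x. x \<in> K \<Longrightarrow> 1 / (n + 1 / Suc k) \<le> measure (P k) {y. x - y \<in> T}"
proof -
  define L where "L = {x - t | x t. x \<in> K \<and> t \<in> T}"
  have [measurable]: "T \<in> sets borel"
    using T by (intro borel_closed compact_imp_closed)
  have "1 \<le> n"
    using one_le_N_star[OF \<open>K \<noteq> {}\<close>, of T] N by (simp add: ennreal_le_iff2)
  have "\<exists>\<mu>. regular_borel_measure \<mu> \<and> covers \<mu> K T \<and> emeasure \<mu> (space \<mu>) < ennreal (n + 1 / Suc k)"
    for k
  proof -
    have "N_star K T < ennreal (n + 1 / Suc k)"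
      unfolding N using \<open>1 \<le> n\<close> by (subst ennreal_less_iff) auto
    then show ?thesis
      unfolding N_star_def INF_less_iff by auto
  qed
  then obtain \<mu> where reg: "\<And>k. regular_borel_measure (\<mu> k)" and cov: "\<And>k. covers (\<mu> k) K T"
    and mass: "\<And>k. emeasure (\<mu> k) (space (\<mu> k)) < ennreal (n + 1 / Suc k)"
    by metis
  have sets: "sets (\<mu> k) = sets borel" for k
    using reg by (simp add: regular_borel_measure_def)
  have "compact L"
    unfolding L_def using K(1) T by (rule compact_differences)
  then have [measurable]: "L \<in> sets borel"
    by (intro borel_closed compact_imp_closed)
  have subset_L: "{y. x - y \<in> T} \<subseteq> L" if "x \<in> K" for x
    using that unfolding L_def by force
  have cover_k: "1 \<le> emeasure (\<mu> k) {y. x - y \<in> T}" if "x \<in> K" for k x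
    using cov[of k] that by (simp add: covers_iff_emeasure[OF sets])
  obtain x0 where "x0 \<in> K"
    using K(2) by blast
  have L_pos: "1 \<le> emeasure (\<mu> k) L" for k
    by (rule order_trans[OF cover_k[OF \<open>x0 \<in> K\<close>] emeasure_mono[OF subset_L[OF \<open>x0 \<in> K\<close>]]])
      (simp add: sets)
  have L_fin: "emeasure (\<mu> k) L < ennreal (n + 1 / Suc k)" for k
    using emeasure_space[of "\<mu> k" L] mass[of k] by (rule le_less_trans)
  then have L_finite: "emeasure (\<mu> k) L < \<top>" for k
    using ennreal_less_top less_trans by blast
  have measure_L: "1 \<le> measure (\<mu> k) L" "measure (\<mu> k) L \<le> n + 1 / Suc k" for k
    using enn2real_mono[OF L_pos L_finite] enn2real_leI[OF _ less_imp_le[OF L_fin]] \<open>1 \<le> n\<close>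
    by (simp_all add: measure_def)
  have measure_cover: "1 \<le> measure (\<mu> k) {y. x - y \<in> T}" if "x \<in> K" for k x
  proof -
    have "emeasure (\<mu> k) {y. x - y \<in> T} \<le> emeasure (\<mu> k) L"
      using subset_L[OF that] sets by (intro emeasure_mono) auto
    then have "emeasure (\<mu> k) {y. x - y \<in> T} < \<top>"
      using L_finite by (rule le_less_trans)
    then show ?thesis
      using enn2real_mono[OF cover_k[OF that]] by (simp add: measure_def)
  qed
  show thesis
  proof (rule that[of "\<lambda>k. uniform_measure (\<mu> k) L"])
    fix k
    show "prob_space (uniform_measure (\<mu> k) L)"
      using L_pos[of k] L_fin[of k] by (intro prob_space_uniform_measure) auto
    show "sets (uniform_measure (\<mu> k) L) = sets borel"
      by (simp add: sets)
    show "AE y in uniform_measure (\<mu> k) L. y \<in> {x - t |x t. x \<in> K \<and> t \<in> T}"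
      unfolding L_def[symmetric] by (rule AE_uniform_measureI) (simp_all add: sets)
    fix x assume "x \<in> K"
    have "1 / (n + 1 / Suc k) \<le> 1 / measure (\<mu> k) L"
      using measure_L[of k] by (intro divide_left_mono) auto
    also have "\<dots> \<le> measure (\<mu> k) {y. x - y \<in> T} / measure (\<mu> k) L"
      using measure_L[of k] measure_cover[OF \<open>x \<in> K\<close>] by (intro divide_right_mono) auto
    also have "\<dots> = measure (uniform_measure (\<mu> k) L) {y. x - y \<in> T}"
      using L_pos[of k] L_fin[of k] subset_L[OF \<open>x \<in> K\<close>] sets
      by (subst measure_uniform_measure) (auto simp: Int_absorb1)
    finally show "1 / (n + 1 / Suc k) \<le> measure (uniform_measure (\<mu> k) L) {y. x - y \<in> T}" .
  qed
qed

lemma optimal_measures_nonempty: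
  fixes K T :: "'a::euclidean_space set"
  assumes K: "compact K" "K \<noteq> {}" and T: "compact T" "interior T \<noteq> {}"
  shows "optimal_measures K T \<noteq> {}"
proof -
  have T_borel[measurable]: "T \<in> sets borel"
    using T by (intro borel_closed compact_imp_closed)
  obtain n where N: "N_star K T = ennreal n" and "1 \<le> n"
    using N_star_finite[OF K(1) T(2)] one_le_N_star[OF K(2), of T]
    by (cases "N_star K T") (auto simp: ennreal_le_iff2)
  obtain P where P: "\<And>k. prob_space (P k)" "\<And>k. sets (P k) = sets borel"
    "\<And>k. AE y in P k. y \<in> {x - t | x t. x \<in> K \<and> t \<in> T}"
    and P_cover: "\<And>k x. x \<in> K \<Longrightarrow> 1 / (n + 1 / Suc k) \<le> measure (P k) {y. x - y \<in> T}"
    using normalised_near_optimal_covers[OF K T(1) N] by blast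
  obtain sub \<rho> where "strict_mono sub" "prob_space \<rho>" and sets_\<rho>: "sets \<rho> = sets borel"
    and \<rho>: "\<And>F c c0. closed F \<Longrightarrow> c \<longlonglongrightarrow> c0 \<Longrightarrow> (\<And>k. c k \<le> measure (P (sub k)) F) \<Longrightarrow>
       c0 \<le> measure \<rho> F"
    using prob_measures_on_compact_convergent_subseq[where P=P, OF compact_differences[OF K(1) T(1)] P]
    by metis
  interpret \<rho>: prob_space \<rho> by fact
  have closed_shifted_reflection: "closed {y. x - y \<in> T}" for x
    using continuous_closed_vimage[OF compact_imp_closed[OF T(1)], of "\<lambda>y. x - y"]
    by (simp add: vimage_def)
  have "(\<lambda>k. 1 / real (Suc k)) \<longlonglongrightarrow> 0"
    using LIMSEQ_inverse_real_of_nat by (simp add: inverse_eq_divide)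
  then have "(\<lambda>k. n + 1 / Suc (sub k)) \<longlonglongrightarrow> n + 0"
    by (intro tendsto_add tendsto_const LIMSEQ_subseq_LIMSEQ[OF _ \<open>strict_mono sub\<close>, unfolded o_def])
  then have "(\<lambda>k. 1 / (n + 1 / Suc (sub k))) \<longlonglongrightarrow> 1 / n"
    using \<open>1 \<le> n\<close> by (intro tendsto_divide tendsto_const) auto
  then have \<rho>_cover: "1 / n \<le> measure \<rho> {y. x - y \<in> T}" if "x \<in> K" for x
    using P_cover[OF that] closed_shifted_reflection by (intro \<rho>) auto
  define \<mu> where "\<mu> = scale_measure (ennreal n) \<rho>"
  have sets_\<mu>: "sets \<mu> = sets borel"
    by (simp add: \<mu>_def sets_\<rho>)
  have mass: "emeasure \<mu> (space \<mu>) = N_star K T"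
    by (simp add: \<mu>_def space_scale_measure \<rho>.emeasure_space_1 N)
  have "covers \<mu> K T"
    unfolding covers_iff_emeasure[OF sets_\<mu> T_borel]
  proof
    fix x assume "x \<in> K"
    have "1 = ennreal n * ennreal (1 / n)"
      using \<open>1 \<le> n\<close> by (simp flip: ennreal_mult)
    also have "\<dots> \<le> ennreal n * emeasure \<rho> {y. x - y \<in> T}"
      using \<rho>_cover[OF \<open>x \<in> K\<close>] by (intro mult_left_mono) (auto simp: \<rho>.emeasure_eq_measure)
    finally show "1 \<le> emeasure \<mu> {y. x - y \<in> T}"
      by (simp add: \<mu>_def)
  qed
  moreover have "regular_borel_measure \<mu>"
    using mass N by (intro regular_borel_measureI[OF sets_\<mu>]) auto
  ultimately show ?thesis
    using mass unfolding optimal_measures_def by blast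
qed

lemma null_measure_optimal:
  "null_measure borel \<in> optimal_measures ({} :: 'a::euclidean_space set) T"
proof -
  have reg: "regular_borel_measure (null_measure (borel :: 'a measure))"
    by (rule regular_borel_measureI) simp_all
  moreover have cov: "covers (null_measure borel) {} T"
    by (simp add: covers_def)
  ultimately have "N_star {} T \<le> 0"
    using N_star_le_emeasure_space[OF reg cov] by simp
  then show ?thesis
    using reg cov by (simp add: optimal_measures_def)
qed

theorem proposition2p6:
  fixes K T :: "'a::euclidean_space set"
  assumes "compact K" and "compact T" and "interior T \<noteq> {}"
  shows "optimal_measures K T \<noteq> {} \<and>
    (\<forall>\<mu> \<in> optimal_measures K T. \<forall>\<nu> \<in> optimal_measures K T. \<forall>t::real. 0 \<le> t \<and> t \<le> 1 \<longrightarrow>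
       convex_comb_measure t \<mu> \<nu> \<in> optimal_measures K T)"
proof
  show "optimal_measures K T \<noteq> {}"
  proof (cases "K = {}")
    case True
    then show ?thesis using null_measure_optimal by blast
  next
    case False
    then show ?thesis using optimal_measures_nonempty assms by blast
  qed
  have T: "T \<in> sets borel"
    using assms(2) by (intro borel_closed compact_imp_closed)
  show "\<forall>\<mu> \<in> optimal_measures K T. \<forall>\<nu> \<in> optimal_measures K T. \<forall>t::real. 0 \<le> t \<and> t \<le> 1 \<longrightarrow>
      convex_comb_measure t \<mu> \<nu> \<in> optimal_measures K T"
    using convex_comb_measure_optimal[OF N_star_finite[OF assms(1,3) T] T] by blast
qed

end
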